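(* Let $\gamma \in (0,1]$. Let $E$ be a valid e-value for a null hypothesis $H_0$, i.e. $E \ge 0$ and $\mathbb{E}[E] \le 1$ under $H_0$, and let $F$ be an arbitrary nonnegative random variable, with any dependence structure between $F$ and $E$. Let $T \in \{0,1\}$ be a random variable such that, conditionally on $(F,E)$, $T \sim \mathrm{Bern}\big((1-\gamma F^{-1})_+\big)$ (i.e. $T$ is drawn based on $F$ using additional independent randomness). Define the active e-value $$\tilde E := (1-T)\,F + T\,(1-\gamma)\,E.$$ Then $\tilde E$ is a valid e-value, i.e. $\tilde E \ge 0$ and $\mathbb{E}[\tilde E] \le 1$ under $H_0$.
   Context: $x_+ = \max(x,0)$. $F$ is a "proxy" for $E$ on which no distributional assumption is made (in particular $\mathbb{E}[F]$ may exceed $1$ under $H_0$). When $F = 0$, $(1-\gamma F^{-1})_+$ is interpreted as $0$. *)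

theory Defs
  imports "HOL-Probability.Probability"
begin

definition bern_param :: "real \<Rightarrow> real \<Rightarrow> real" where
  "bern_param \<gamma> f = (if f = 0 then 0 else max (1 - \<gamma> / f) 0)"

definition active_evalue :: "real \<Rightarrow> real \<Rightarrow> real \<Rightarrow> real \<Rightarrow> real" where
  "active_evalue \<gamma> t f e = (1 - t) * f + t * (1 - \<gamma>) * e"

end

theory Submission
  imports Defs
begin

text \<open>Write $p = (1 - \gamma F^{-1})_+$. Since $T$ is conditionally $\mathrm{Bern}(p)$ given a
$\sigma$-algebra for which $F$ and $E$ are measurable, the tower property gives
$\mathbb{E}[(1-T) F] = \mathbb{E}[(1-p) F]$ and $\mathbb{E}[T E] = \mathbb{E}[p E]$.
Pointwise $(1-p) F = \min(F, \gamma) \le \gamma$ and $p E \le E$, so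
$\mathbb{E}[\tilde E] \le \gamma + (1-\gamma)\,\mathbb{E}[E] \le 1$.\<close>

lemma bern_param_nonneg: "0 \<le> bern_param \<gamma> f"
  by (simp add: bern_param_def)

lemma bern_param_le_one:
  assumes "0 \<le> \<gamma>" "0 \<le> f"
  shows "bern_param \<gamma> f \<le> 1"
  using assms by (simp add: bern_param_def)

lemma one_minus_bern_param_mult_le:
  assumes "0 \<le> \<gamma>" "0 \<le> f"
  shows "(1 - bern_param \<gamma> f) * f \<le> \<gamma>"
  using assms by (auto simp: bern_param_def max_def field_simps)

lemma active_evalue_nonneg:
  assumes "\<gamma> \<le> 1" "t \<in> {0, 1}" "0 \<le> f" "0 \<le> e"
  shows "0 \<le> active_evalue \<gamma> t f e"
  using assms by (auto simp: active_evalue_def)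

lemma subalgebra_vimage_algebra:
  assumes "f \<in> measurable M N"
  shows "subalgebra M (vimage_algebra (space M) f N)"
  using sets_image_in_sets[OF refl assms] by (simp add: subalgebra_def)

lemma
  fixes f :: "'a \<Rightarrow> 'b::topological_space" and g :: "'a \<Rightarrow> 'c::topological_space"
  shows measurable_vimage_algebra_pair_fst:
      "f \<in> borel_measurable (vimage_algebra X (\<lambda>x. (f x, g x)) borel)"
    and measurable_vimage_algebra_pair_snd:
      "g \<in> borel_measurable (vimage_algebra X (\<lambda>x. (f x, g x)) borel)"
proof -
  have pair: "(\<lambda>x. (f x, g x)) \<in> borel_measurable (vimage_algebra X (\<lambda>x. (f x, g x)) borel)"
    by (rule measurable_vimage_algebra1) simp
  have "fst \<in> borel_measurable (borel :: ('b \<times> 'c) measure)"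
    by (intro borel_measurable_continuous_onI continuous_intros)
  from measurable_comp[OF pair this]
  show "f \<in> borel_measurable (vimage_algebra X (\<lambda>x. (f x, g x)) borel)"
    by (simp add: o_def)
  have "snd \<in> borel_measurable (borel :: ('b \<times> 'c) measure)"
    by (intro borel_measurable_continuous_onI continuous_intros)
  from measurable_comp[OF pair this]
  show "g \<in> borel_measurable (vimage_algebra X (\<lambda>x. (f x, g x)) borel)"
    by (simp add: o_def)
qed

lemma ennreal_sum_eq_one_split:
  assumes "a + b = (1 :: ennreal)"
  shows "a = ennreal (enn2real a)" "b = ennreal (1 - enn2real a)"
proof -
  have fin: "a \<noteq> top" "b \<noteq> top"
    using assms by (metis ennreal_add_eq_top ennreal_one_neq_top)+
  then show "a = ennreal (enn2real a)"
    by (simp add: ennreal_enn2real_if)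
  have "enn2real a + enn2real b = 1"
    using assms fin by (metis enn2real_1 enn2real_plus top.not_eq_extremum)
  then show "b = ennreal (1 - enn2real a)"
    using fin by (metis add_diff_cancel_left' ennreal_enn2real_if)
qed

context sigma_finite_subalgebra
begin

lemma real_cond_exp_eq_enn2real_nn_cond_exp:
  assumes [measurable]: "f \<in> borel_measurable M"
    and "\<forall>x\<in>space M. 0 \<le> f x"
  shows "AE x in M. real_cond_exp M F f x = enn2real (nn_cond_exp M F (\<lambda>x. ennreal (f x)) x)"
proof -
  have "AE x in M. nn_cond_exp M F (\<lambda>x. ennreal (- f x)) x = nn_cond_exp M F (\<lambda>x. 0) x"
    by (rule nn_cond_exp_cong) (use assms(2) in \<open>auto intro!: AE_I2 ennreal_neg\<close>)
  moreover have "AE x in M. 0 = nn_cond_exp M F (\<lambda>x. 0) x"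
    by (rule nn_cond_exp_F_meas) simp
  ultimately show ?thesis
    by eventually_elim (simp add: real_cond_exp_def)
qed

lemma nn_cond_exp_add_complement:
  assumes [measurable]: "f \<in> borel_measurable M"
    and "\<forall>x\<in>space M. 0 \<le> f x \<and> f x \<le> 1"
  shows "AE x in M. nn_cond_exp M F (\<lambda>x. ennreal (f x)) x
                   + nn_cond_exp M F (\<lambda>x. ennreal (1 - f x)) x = 1"
proof -
  have "AE x in M. nn_cond_exp M F (\<lambda>x. ennreal (f x)) x + nn_cond_exp M F (\<lambda>x. ennreal (1 - f x)) x
                 = nn_cond_exp M F (\<lambda>x. ennreal (f x) + ennreal (1 - f x)) x"
    by (rule nn_cond_exp_sum) auto
  moreover have "AE x in M. nn_cond_exp M F (\<lambda>x. ennreal (f x) + ennreal (1 - f x)) x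
                          = nn_cond_exp M F (\<lambda>x. 1) x"
    by (rule nn_cond_exp_cong) (use assms(2) in \<open>auto intro!: AE_I2 simp flip: ennreal_plus\<close>)
  moreover have "AE x in M. 1 = nn_cond_exp M F (\<lambda>x. 1) x"
    by (rule nn_cond_exp_F_meas) simp
  ultimately show ?thesis
    by eventually_elim simp
qed

lemma nn_cond_exp_unit_interval:
  assumes "f \<in> borel_measurable M"
    and "\<forall>x\<in>space M. 0 \<le> f x \<and> f x \<le> 1"
  shows "AE x in M. nn_cond_exp M F (\<lambda>x. ennreal (f x)) x = ennreal (real_cond_exp M F f x)
                  \<and> nn_cond_exp M F (\<lambda>x. ennreal (1 - f x)) x = ennreal (1 - real_cond_exp M F f x)"
proof -
  have "\<forall>x\<in>space M. 0 \<le> f x"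
    using assms(2) by blast
  from nn_cond_exp_add_complement[OF assms] real_cond_exp_eq_enn2real_nn_cond_exp[OF assms(1) this]
  show ?thesis
    by eventually_elim (metis ennreal_sum_eq_one_split)
qed

lemma nn_integral_mult_cond_prob:
  assumes [measurable]: "g \<in> borel_measurable F" "f \<in> borel_measurable M"
    and "\<forall>x\<in>space M. 0 \<le> f x \<and> f x \<le> 1"
    and "AE x in M. real_cond_exp M F f x = p x"
  shows "(\<integral>\<^sup>+ x. g x * ennreal (f x) \<partial>M) = (\<integral>\<^sup>+ x. g x * ennreal (p x) \<partial>M)"
    and "(\<integral>\<^sup>+ x. g x * ennreal (1 - f x) \<partial>M) = (\<integral>\<^sup>+ x. g x * ennreal (1 - p x) \<partial>M)"
proof -
  have cond: "AE x in M. nn_cond_exp M F (\<lambda>x. ennreal (f x)) x = ennreal (p x)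
                       \<and> nn_cond_exp M F (\<lambda>x. ennreal (1 - f x)) x = ennreal (1 - p x)"
    using nn_cond_exp_unit_interval[OF assms(2,3)] assms(4) by eventually_elim simp
  have "(\<integral>\<^sup>+ x. g x * ennreal (f x) \<partial>M) = (\<integral>\<^sup>+ x. g x * nn_cond_exp M F (\<lambda>x. ennreal (f x)) x \<partial>M)"
    by (rule nn_cond_exp_intg[symmetric]) auto
  also have "\<dots> = (\<integral>\<^sup>+ x. g x * ennreal (p x) \<partial>M)"
    by (rule nn_integral_cong_AE) (use cond in auto)
  finally show "(\<integral>\<^sup>+ x. g x * ennreal (f x) \<partial>M) = (\<integral>\<^sup>+ x. g x * ennreal (p x) \<partial>M)" .
  have "(\<integral>\<^sup>+ x. g x * ennreal (1 - f x) \<partial>M)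
      = (\<integral>\<^sup>+ x. g x * nn_cond_exp M F (\<lambda>x. ennreal (1 - f x)) x \<partial>M)"
    by (rule nn_cond_exp_intg[symmetric]) auto
  also have "\<dots> = (\<integral>\<^sup>+ x. g x * ennreal (1 - p x) \<partial>M)"
    by (rule nn_integral_cong_AE) (use cond in auto)
  finally show "(\<integral>\<^sup>+ x. g x * ennreal (1 - f x) \<partial>M) = (\<integral>\<^sup>+ x. g x * ennreal (1 - p x) \<partial>M)" .
qed

end

lemma nn_integral_active_evalue_le:
  fixes G :: "'a measure"
  assumes "prob_space M" "subalgebra M G"
    and "0 < \<gamma>" "\<gamma> \<le> 1"
    and E: "E \<in> borel_measurable G" "\<forall>x\<in>space M. 0 \<le> E x"
    and F: "F \<in> borel_measurable G" "\<forall>x\<in>space M. 0 \<le> F x"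
    and T: "T \<in> borel_measurable M" "\<forall>x\<in>space M. T x \<in> {0, 1}"
    and cond_prob: "AE x in M. real_cond_exp M G T x = bern_param \<gamma> (F x)"
  shows "(\<integral>\<^sup>+ x. ennreal (active_evalue \<gamma> (T x) (F x) (E x)) \<partial>M)
           \<le> \<gamma> + ennreal (1 - \<gamma>) * (\<integral>\<^sup>+ x. ennreal (E x) \<partial>M)"
proof -
  interpret prob_space M by fact
  interpret finite_measure_subalgebra M G
    by unfold_locales fact
  note [measurable] = E(1) F(1) T(1)
  have [measurable]: "E \<in> borel_measurable M" "F \<in> borel_measurable M"
    using E(1) F(1) by (simp_all add: measurable_from_subalg[OF subalg])
  define p where "p x = bern_param \<gamma> (F x)" for x
  have T01: "\<forall>x\<in>space M. 0 \<le> T x \<and> T x \<le> 1"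
    using T(2) by auto
  have "(\<integral>\<^sup>+ x. ennreal (active_evalue \<gamma> (T x) (F x) (E x)) \<partial>M)
      = (\<integral>\<^sup>+ x. ennreal (F x) * ennreal (1 - T x) + ennreal ((1 - \<gamma>) * E x) * ennreal (T x) \<partial>M)"
    using E(2) F(2) T(2) \<open>\<gamma> \<le> 1\<close>
    by (intro nn_integral_cong) (auto simp: active_evalue_def)
  also have "\<dots> = (\<integral>\<^sup>+ x. ennreal (F x) * ennreal (1 - T x) \<partial>M)
                  + (\<integral>\<^sup>+ x. ennreal ((1 - \<gamma>) * E x) * ennreal (T x) \<partial>M)"
    by (rule nn_integral_add) auto
  also have "\<dots> = (\<integral>\<^sup>+ x. ennreal (F x) * ennreal (1 - p x) \<partial>M)
                  + (\<integral>\<^sup>+ x. ennreal ((1 - \<gamma>) * E x) * ennreal (p x) \<partial>M)"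
    using nn_integral_mult_cond_prob[OF _ T(1) T01 cond_prob[folded p_def]] by simp
  also have "\<dots> \<le> (\<integral>\<^sup>+ x. ennreal \<gamma> \<partial>M) + (\<integral>\<^sup>+ x. ennreal (1 - \<gamma>) * ennreal (E x) \<partial>M)"
  proof (intro add_mono nn_integral_mono)
    fix x assume x: "x \<in> space M"
    have p: "0 \<le> p x" "p x \<le> 1"
      using x F(2) \<open>0 < \<gamma>\<close> by (simp_all add: p_def bern_param_nonneg bern_param_le_one)
    have "F x * (1 - p x) \<le> \<gamma>"
      using one_minus_bern_param_mult_le[of \<gamma> "F x"] x F(2) \<open>0 < \<gamma>\<close>
      by (simp add: p_def mult.commute)
    then show "ennreal (F x) * ennreal (1 - p x) \<le> ennreal \<gamma>"
      using p x F(2) by (simp add: ennreal_leI flip: ennreal_mult)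
    have "(1 - \<gamma>) * E x * p x \<le> (1 - \<gamma>) * E x"
      using p x E(2) \<open>\<gamma> \<le> 1\<close> by (simp add: mult_left_le)
    then show "ennreal ((1 - \<gamma>) * E x) * ennreal (p x) \<le> ennreal (1 - \<gamma>) * ennreal (E x)"
      using p x E(2) \<open>\<gamma> \<le> 1\<close> by (simp add: ennreal_leI flip: ennreal_mult' ennreal_mult)
  qed
  also have "\<dots> = \<gamma> + ennreal (1 - \<gamma>) * (\<integral>\<^sup>+ x. ennreal (E x) \<partial>M)"
    by (simp add: nn_integral_cmult emeasure_space_1)
  finally show ?thesis .
qed

theorem proposition1:
  fixes M :: "'a measure" and E F T :: "'a \<Rightarrow> real" and \<gamma> :: real
  assumes "prob_space M"
    and "0 < \<gamma>" and "\<gamma> \<le> 1"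
    and "E \<in> borel_measurable M" and "\<forall>x\<in>space M. 0 \<le> E x"
    and "(\<integral>\<^sup>+ x. ennreal (E x) \<partial>M) \<le> 1"
    and "F \<in> borel_measurable M" and "\<forall>x\<in>space M. 0 \<le> F x"
    and "T \<in> borel_measurable M" and "\<forall>x\<in>space M. T x \<in> {0, 1}"
    and "AE x in M. real_cond_exp M (vimage_algebra (space M) (\<lambda>x. (F x, E x)) borel) T x
                     = bern_param \<gamma> (F x)"
  shows "(\<forall>x\<in>space M. 0 \<le> active_evalue \<gamma> (T x) (F x) (E x))
       \<and> (\<integral>\<^sup>+ x. ennreal (active_evalue \<gamma> (T x) (F x) (E x)) \<partial>M) \<le> 1"
proof
  show "\<forall>x\<in>space M. 0 \<le> active_evalue \<gamma> (T x) (F x) (E x)"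
    using assms(3,5,8,10) by (simp add: active_evalue_nonneg)
  have "(\<lambda>x. (F x, E x)) \<in> borel_measurable M"
    using assms(4,7) by measurable
  then have "subalgebra M (vimage_algebra (space M) (\<lambda>x. (F x, E x)) borel)"
    by (rule subalgebra_vimage_algebra)
  then have "(\<integral>\<^sup>+ x. ennreal (active_evalue \<gamma> (T x) (F x) (E x)) \<partial>M)
          \<le> \<gamma> + ennreal (1 - \<gamma>) * (\<integral>\<^sup>+ x. ennreal (E x) \<partial>M)"
    using measurable_vimage_algebra_pair_snd measurable_vimage_algebra_pair_fst
    by (rule nn_integral_active_evalue_le[OF assms(1) _ assms(2,3) _ assms(5) _ assms(8-11)])
  also have "\<dots> \<le> \<gamma> + ennreal (1 - \<gamma>) * 1"
    using assms(6) by (intro add_left_mono mult_left_mono) auto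
  also have "\<dots> = 1"
    using assms(2,3) by (simp flip: ennreal_plus)
  finally show "(\<integral>\<^sup>+ x. ennreal (active_evalue \<gamma> (T x) (F x) (E x)) \<partial>M) \<le> 1" .
qed

end
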